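(* Let $f_{1,\infty}=\{f_n\}$ be a sequence of continuous maps $f_n:[0,1]\to[0,1]$ converging uniformly to $f$, such that $\{f_n^k\}_{k\in\mathbb{N}}$ converges collectively to $\{f^k\}_{k\in\mathbb{N}}$ and $f_{1,\infty}$ is feebly open. Then the following are equivalent for $([0,1],f_{1,\infty})$: (1) it is strongly multi-sensitive; (2) it is $\mathcal{N}$-sensitive; (3) it is multi-sensitive; (4) it is sensitive.
   Context: Usual metric $d$ on $[0,1]$. Write $f_i^n=f_{n+i-1}\circ\cdots\circ f_i$, $f_i^0=\mathrm{id}$. Collective convergence: for every $\epsilon>0$ there is $N_0$ such that $\sup_x d(f_N^k(x),f^k(x))<\epsilon$ for all $N\ge N_0$ and all $k\in\mathbb{N}$. Feebly open: $\mathrm{int}(f_n(U))\ne\varnothing$ for every nonempty open $U$ and every $n$. $f_{1,\infty}^{[k]}=\{f^k_{k(n-1)+1}\}_{n=1}^\infty$ (its $n$-fold composition from index $1$ is $f_1^{kn}$). $N_{f_{1,\infty}}(V,\delta)=\{n\in\mathbb{N}:\exists u,v\in V,\ d(f_1^n(u),f_1^n(v))>\delta\}$. Sensitive: there is $\delta>0$ with $N_{f_{1,\infty}}(V,\delta)\ne\varnothing$ for all nonempty open $V$. Multi-sensitive: there is $\delta>0$ with $\bigcap_{i=1}^m N_{f_{1,\infty}}(V_i,\delta)\ne\varnothing$ for every finite collection of nonempty open $V_1,\dots,V_m$. For $\mathbf{v}=(v_1,\dots,v_r)\in\mathbb{N}^r$, multi-sensitive with respect to $\mathbf{v}$: there is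 $\delta>0$ such that $\bigcap_{i=1}^r N_{f_{1,\infty}^{[v_i]}}(U_i,\delta)\ne\varnothing$ for all nonempty open $U_1,\dots,U_r$; $\mathcal{N}$-sensitive: multi-sensitive with respect to $(1,\dots,n)$ for every $n$; strongly multi-sensitive: multi-sensitive with respect to every vector in $\mathbb{N}^r$, for every $r$. *)

theory Defs
  imports "HOL-Analysis.Analysis"
begin

text \<open>Sequences of maps are indexed by nat; index 0 is unused, the paper's
  f_1, f_2, ... are f 1, f 2, ....\<close>

text \<open>fcomp f i n = f_i^n = f_(i+n-1) o ... o f_i, and f_i^0 = id.\<close>
fun fcomp :: "(nat \<Rightarrow> real \<Rightarrow> real) \<Rightarrow> nat \<Rightarrow> nat \<Rightarrow> real \<Rightarrow> real" where
  "fcomp f i 0 = id"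
| "fcomp f i (Suc n) = f (i + n) \<circ> fcomp f i n"

definition I01 :: "real set" where "I01 = {0..1}"

definition collectively_converges ::
  "(nat \<Rightarrow> real \<Rightarrow> real) \<Rightarrow> (real \<Rightarrow> real) \<Rightarrow> bool" where
  "collectively_converges f g \<longleftrightarrow>
     (\<forall>\<epsilon>>0. \<exists>N0. \<forall>N\<ge>N0. \<forall>k::nat.
        (SUP x\<in>I01. dist (fcomp f N k x) ((g ^^ k) x)) < \<epsilon>)"

definition feebly_open :: "(nat \<Rightarrow> real \<Rightarrow> real) \<Rightarrow> bool" where
  "feebly_open f \<longleftrightarrow>
     (\<forall>U n. openin (top_of_set I01) U \<and> U \<noteq> {} \<and> n \<ge> 1 \<longrightarrow>
        (top_of_set I01) interior_of (f n ` U) \<noteq> {})"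

definition fpow_seq :: "(nat \<Rightarrow> real \<Rightarrow> real) \<Rightarrow> nat \<Rightarrow> nat \<Rightarrow> real \<Rightarrow> real" where
  "fpow_seq f k = (\<lambda>n. fcomp f (k * (n - 1) + 1) k)"

definition Nset :: "(nat \<Rightarrow> real \<Rightarrow> real) \<Rightarrow> real set \<Rightarrow> real \<Rightarrow> nat set" where
  "Nset f V \<delta> = {n. n \<ge> 1 \<and> (\<exists>u\<in>V. \<exists>v\<in>V. dist (fcomp f 1 n u) (fcomp f 1 n v) > \<delta>)}"

definition nonempty_open :: "real set \<Rightarrow> bool" where
  "nonempty_open V \<longleftrightarrow> openin (top_of_set I01) V \<and> V \<noteq> {}"

definition sensitive :: "(nat \<Rightarrow> real \<Rightarrow> real) \<Rightarrow> bool" where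
  "sensitive f \<longleftrightarrow> (\<exists>\<delta>>0. \<forall>V. nonempty_open V \<longrightarrow> Nset f V \<delta> \<noteq> {})"

definition multi_sensitive :: "(nat \<Rightarrow> real \<Rightarrow> real) \<Rightarrow> bool" where
  "multi_sensitive f \<longleftrightarrow> (\<exists>\<delta>>0. \<forall>Vs::real set list.
     Vs \<noteq> [] \<and> (\<forall>V\<in>set Vs. nonempty_open V) \<longrightarrow>
       (\<Inter>i<length Vs. Nset f (Vs ! i) \<delta>) \<noteq> {})"

definition multi_sensitive_wrt :: "(nat \<Rightarrow> real \<Rightarrow> real) \<Rightarrow> nat list \<Rightarrow> bool" where
  "multi_sensitive_wrt f vs \<longleftrightarrow> (\<exists>\<delta>>0. \<forall>Us::real set list.
     length Us = length vs \<and> (\<forall>U\<in>set Us. nonempty_open U) \<longrightarrow>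
       (\<Inter>i<length vs. Nset (fpow_seq f (vs ! i)) (Us ! i) \<delta>) \<noteq> {})"

definition N_sensitive :: "(nat \<Rightarrow> real \<Rightarrow> real) \<Rightarrow> bool" where
  "N_sensitive f \<longleftrightarrow> (\<forall>n\<ge>1. multi_sensitive_wrt f [1..<n+1])"

definition strongly_multi_sensitive :: "(nat \<Rightarrow> real \<Rightarrow> real) \<Rightarrow> bool" where
  "strongly_multi_sensitive f \<longleftrightarrow>
     (\<forall>vs. vs \<noteq> [] \<and> (\<forall>v\<in>set vs. v \<ge> 1) \<longrightarrow> multi_sensitive_wrt f vs)"

end

theory Submission
  imports Defs
begin

text \<open>Sensitivity already forces cofinite sensitivity: there is \<delta>' > 0 such that N(V, \<delta>')
  contains all large n for every nonempty open V, and every multi-sensitivity notion follows from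
  that at once. To get it, cut [0,1] into cells of width \<delta>/4, \<delta> a sensitivity constant, and
  call a cell relevant when some late iterate f_1^a maps an open set into it. Late iterates stretch
  small connected open sets across gaps of length \<delta>, and by collective convergence the tails
  f_(a+1)^s stay \<delta>/8-close to g^s, so g^s maps every relevant cell onto a superset of another
  relevant cell. Among finitely many cells this covering relation closes up into a cycle
  J \<subseteq> g^K(J), and such a J is stretched by every g^s to size at least some c > 0; covering pulls
  this back to all relevant cells. Finally every open V has a late image containing a relevant
  cell, and collective convergence transfers the stretching by g to the tails of the sequence.\<close>

lemma ex_pos_bound_finite:
  fixes P :: "'a \<Rightarrow> real \<Rightarrow> bool"
  assumes "finite S" and "\<And>i. i \<in> S \<Longrightarrow> \<exists>c>0. P i c"
    and "\<And>i c c'. P i c \<Longrightarrow> 0 < c' \<Longrightarrow> c' \<le> c \<Longrightarrow> P i c'"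
  shows "\<exists>c>0. \<forall>i\<in>S. P i c"
proof -
  obtain cf where cf: "\<And>i. i \<in> S \<Longrightarrow> 0 < cf i \<and> P i (cf i)"
    using assms(2) by metis
  define c where "c = Min (insert 1 (cf ` S))"
  have "0 < c"
    using assms(1) cf by (auto simp: c_def)
  moreover have "P i c" if "i \<in> S" for i
    using assms(3)[of i "cf i" c] cf[OF that] \<open>0 < c\<close> assms(1) that by (simp add: c_def)
  ultimately show ?thesis by blast
qed

lemma finite_trans_reaches_loop:
  assumes "finite S"
    and trans: "\<And>a b c. R a b \<Longrightarrow> R b c \<Longrightarrow> R a c"
    and succ: "\<And>i. i \<in> S \<Longrightarrow> \<exists>j\<in>S. R i j"
    and "i \<in> S"
  shows "\<exists>j\<in>S. R i j \<and> R j j"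
proof -
  obtain nx where nx: "\<And>i. i \<in> S \<Longrightarrow> nx i \<in> S \<and> R i (nx i)"
    using succ by metis
  define x where "x m = (nx ^^ m) i" for m
  have x_in: "x m \<in> S" for m
    by (induction m) (auto simp: x_def \<open>i \<in> S\<close> nx)
  have chain: "R (x a) (x b)" if "a < b" for a b
    using that
  proof (induction b)
    case (Suc b)
    have "R (x b) (x (Suc b))"
      using nx[OF x_in[of b]] by (simp add: x_def)
    then show ?case
      using Suc trans by (auto simp: less_Suc_eq)
  qed simp
  have "\<not> inj x"
    using finite_subset[OF _ \<open>finite S\<close>, of "range x"] x_in finite_imageD by blast
  then obtain a b where "a < b" "x a = x b"
    unfolding inj_def by (metis linorder_neq_iff)
  then have "R (x b) (x b)" "R i (x b)"
    using chain[of a b] chain[of 0 b] by (auto simp: x_def)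
  then show ?thesis
    using x_in by blast
qed

definition spreads :: "('a::metric_space \<Rightarrow> 'a) \<Rightarrow> real \<Rightarrow> 'a set \<Rightarrow> nat \<Rightarrow> bool" where
  "spreads g c G s \<longleftrightarrow> (\<exists>p\<in>G. \<exists>q\<in>G. c \<le> dist ((g ^^ s) p) ((g ^^ s) q))"

lemma spreads_mono: "spreads g c G s \<Longrightarrow> c' \<le> c \<Longrightarrow> spreads g c' G s"
  unfolding spreads_def by force

lemma spreads_covered:
  assumes "H \<subseteq> (g ^^ t) ` G" and "spreads g c H s"
  shows "spreads g c G (s + t)"
proof -
  obtain p q where "p \<in> H" "q \<in> H" "c \<le> dist ((g ^^ s) p) ((g ^^ s) q)"
    using assms(2) unfolding spreads_def by blast
  moreover obtain p' q' where "p' \<in> G" "q' \<in> G" "p = (g ^^ t) p'" "q = (g ^^ t) q'"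
    using assms(1) \<open>p \<in> H\<close> \<open>q \<in> H\<close> by blast
  ultimately show ?thesis
    unfolding spreads_def funpow_add comp_def by blast
qed

text \<open>A set that g^K maps onto a superset of itself is never collapsed by an iterate of g,
  and only the finitely many residues of s modulo K matter.\<close>
lemma periodic_set_spreads:
  fixes g :: "'a::metric_space \<Rightarrow> 'a"
  assumes cyc: "G \<subseteq> (g ^^ K) ` G" and "K \<ge> 1" and "a \<in> G" "b \<in> G" "a \<noteq> b"
  shows "\<exists>c>0. \<forall>s. spreads g c G s"
proof -
  have cyc_mult: "G \<subseteq> (g ^^ (K * m)) ` G" for m
  proof (induction m)
    case (Suc m)
    have "G \<subseteq> (g ^^ (K * m)) ` (g ^^ K) ` G"
      using Suc cyc by (meson image_mono order_trans)
    moreover have "K * Suc m = K * m + K"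
      by simp
    ultimately show ?case
      by (simp only: funpow_add image_comp)
  qed simp
  have not_const: "\<exists>p\<in>G. \<exists>q\<in>G. (g ^^ r) p \<noteq> (g ^^ r) q" for r
  proof (rule ccontr)
    assume "\<not> ?thesis"
    then have collapse: "(g ^^ r) ` G = {(g ^^ r) a}"
      using \<open>a \<in> G\<close> by blast
    have "K * r = (K * r - r) + r"
      using \<open>K \<ge> 1\<close> by simp
    then have "(g ^^ (K * r)) ` G = (g ^^ (K * r - r)) ` (g ^^ r) ` G"
      by (metis funpow_add image_comp)
    then have "G \<subseteq> {(g ^^ (K * r - r)) ((g ^^ r) a)}"
      using cyc_mult[of r] collapse by simp
    then show False
      using \<open>a \<in> G\<close> \<open>b \<in> G\<close> \<open>a \<noteq> b\<close> by blast
  qed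
  obtain c where "c > 0" and c: "\<forall>r\<in>{..<K}. spreads g c G r"
  proof -
    have "\<exists>c>0. spreads g c G r" for r
      using not_const[of r] unfolding spreads_def by (metis dist_pos_lt order_refl)
    then show ?thesis
      using ex_pos_bound_finite[of "{..<K}" "\<lambda>r c. spreads g c G r"] spreads_mono that
      by blast
  qed
  have "spreads g c G s" for s
  proof -
    have "spreads g c G (s mod K)"
      using c \<open>K \<ge> 1\<close> by simp
    then have "spreads g c G (s mod K + K * (s div K))"
      by (rule spreads_covered[OF cyc_mult])
    then show ?thesis
      by simp
  qed
  then show ?thesis
    using \<open>c > 0\<close> by blast
qed

lemma fcomp_add: "fcomp f i (a + s) = fcomp f (i + a) s \<circ> fcomp f i a"
  by (induction s) (auto simp: add.assoc)

lemma fcomp_fpow_seq: "fcomp (fpow_seq f k) 1 n = fcomp f 1 (k * n)"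
proof (induction n)
  case (Suc n)
  have "fcomp f 1 (k * n + k) = fcomp f (1 + k * n) k \<circ> fcomp f 1 (k * n)"
    by (rule fcomp_add)
  then show ?case
    using Suc by (simp add: fpow_seq_def add.commute)
qed simp

lemma Nset_fpow_seq:
  assumes "k \<ge> 1"
  shows "Nset (fpow_seq f k) U \<delta> = {n. n \<ge> 1 \<and> k * n \<in> Nset f U \<delta>}"
  using assms unfolding Nset_def fcomp_fpow_seq by auto

lemma fcomp_maps:
  assumes "\<And>n. n \<ge> 1 \<Longrightarrow> f n ` I01 \<subseteq> I01" and "i \<ge> 1" and "x \<in> I01"
  shows "fcomp f i k x \<in> I01"
  using assms by (induction k) (auto simp: image_subset_iff)

lemma continuous_on_fcomp:
  assumes "\<And>n. n \<ge> 1 \<Longrightarrow> continuous_on I01 (f n)" and "\<And>n. n \<ge> 1 \<Longrightarrow> f n ` I01 \<subseteq> I01"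
    and "i \<ge> 1"
  shows "continuous_on I01 (fcomp f i k)"
proof (induction k)
  case (Suc k)
  have "fcomp f i k ` I01 \<subseteq> I01"
    using fcomp_maps[where f = f] assms(2,3) by blast
  then show ?case
    using Suc assms(1)[of "i + k"] assms(3) by (auto intro: continuous_on_compose2)
qed simp

lemma uniform_limit_maps_I01:
  assumes "\<And>n. n \<ge> 1 \<Longrightarrow> f n ` I01 \<subseteq> I01" and "uniform_limit I01 f g sequentially"
  shows "g ` I01 \<subseteq> I01"
proof
  fix y assume "y \<in> g ` I01"
  then obtain x where "x \<in> I01" "y = g x"
    by blast
  then have "(\<lambda>n. f n x) \<longlonglongrightarrow> y"
    using tendsto_uniform_limitI[OF assms(2)] by blast
  moreover have "eventually (\<lambda>n. f n x \<in> I01) sequentially"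
    using assms(1) \<open>x \<in> I01\<close> by (auto simp: eventually_sequentially)
  ultimately show "y \<in> I01"
    by (intro Lim_in_closed_set[of I01]) (auto simp: I01_def)
qed

lemma uniform_limit_continuous_on_I01:
  assumes "\<And>n. n \<ge> 1 \<Longrightarrow> continuous_on I01 (f n)" and "uniform_limit I01 f g sequentially"
  shows "continuous_on I01 g"
  using assms by (intro uniform_limit_theorem[OF _ assms(2)]) (auto simp: eventually_sequentially)

lemma funpow_maps:
  assumes "g ` S \<subseteq> S" and "x \<in> S"
  shows "(g ^^ k) x \<in> S"
  using assms by (induction k) auto

lemma continuous_on_funpow:
  assumes "g ` S \<subseteq> S" and "continuous_on S g"
  shows "continuous_on S (g ^^ k)"
proof (induction k)
  case (Suc k)
  then show ?case
    using assms funpow_maps[OF assms(1)] by (auto intro: continuous_on_compose2)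
qed (simp add: continuous_on_id)

text \<open>The bound needs both maps to stay in I01: otherwise the supremum in the definition of
  collective convergence is a junk value.\<close>
lemma collectively_converges_dist:
  assumes "\<And>n. n \<ge> 1 \<Longrightarrow> f n ` I01 \<subseteq> I01" and "g ` I01 \<subseteq> I01"
    and "collectively_converges f g" and "e > 0"
  shows "\<exists>N0. \<forall>N\<ge>N0. \<forall>k. \<forall>x\<in>I01. dist (fcomp f N k x) ((g ^^ k) x) < e"
proof -
  obtain N0 where N0: "\<forall>N\<ge>N0. \<forall>k. (SUP x\<in>I01. dist (fcomp f N k x) ((g ^^ k) x)) < e"
    using assms(3,4) unfolding collectively_converges_def by blast
  have "dist (fcomp f N k x) ((g ^^ k) x) < e" if "N \<ge> max N0 1" "x \<in> I01" for N k x
  proof -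
    have "dist (fcomp f N k y) ((g ^^ k) y) \<le> 1" if "y \<in> I01" for y
    proof -
      have "fcomp f N k y \<in> I01" "(g ^^ k) y \<in> I01"
        using fcomp_maps[where f = f, OF assms(1)] funpow_maps[OF assms(2)] \<open>N \<ge> max N0 1\<close> that
        by auto
      then show ?thesis
        by (auto simp: I01_def dist_real_def)
    qed
    then have "bdd_above ((\<lambda>y. dist (fcomp f N k y) ((g ^^ k) y)) ` I01)"
      by (intro bdd_aboveI[of _ 1]) auto
    then have "dist (fcomp f N k x) ((g ^^ k) x) \<le> (SUP y\<in>I01. dist (fcomp f N k y) ((g ^^ k) y))"
      using \<open>x \<in> I01\<close> by (rule cSUP_upper2) simp
    also have "\<dots> < e"
      using N0 that by simp
    finally show ?thesis .
  qed
  then show ?thesis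
    by blast
qed

lemma Icc_subset_connected_image:
  fixes H :: "'a::topological_space \<Rightarrow> 'b::linorder_topology"
  assumes "connected (H ` S)" and "p \<in> S" and "q \<in> S"
  shows "{min (H p) (H q) .. max (H p) (H q)} \<subseteq> H ` S"
  using assms by (intro connected_contains_Icc) (auto simp: min_def max_def)

lemma nonempty_open_preimage_ball:
  assumes "continuous_on I01 H" and "openin (top_of_set I01) V" and "y \<in> H ` V" and "r > 0"
  shows "\<exists>V'. nonempty_open V' \<and> V' \<subseteq> V \<and> H ` V' \<subseteq> ball y r"
proof (intro exI conjI)
  let ?V' = "V \<inter> (I01 \<inter> H -` ball y r)"
  have "openin (top_of_set I01) (I01 \<inter> H -` ball y r)"
    using assms(1) by (rule continuous_openin_preimage[where T = UNIV]) auto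
  then have "openin (top_of_set I01) ?V'"
    by (rule openin_Int[OF assms(2)])
  moreover have "?V' \<noteq> {}"
    using assms(2-4) openin_subset by fastforce
  ultimately show "nonempty_open ?V'"
    by (simp add: nonempty_open_def)
qed auto

lemma Icc_min_max_shrink_subset:
  fixes A B P Q e :: real
  assumes "\<bar>A - P\<bar> < e" and "\<bar>B - Q\<bar> < e"
  shows "{min A B + e .. max A B - e} \<subseteq> {min P Q .. max P Q}"
  using assms by (auto simp: min_def max_def abs_less_iff)

lemma spreads_transfer_to_fcomp:
  assumes shadow: "\<forall>x\<in>I01. dist (fcomp f (1 + n) s x) ((g ^^ s) x) < e"
    and "G \<subseteq> I01" and "G \<subseteq> fcomp f 1 n ` V" and "spreads g c G s"
  shows "\<exists>u\<in>V. \<exists>v\<in>V. c - 2 * e < dist (fcomp f 1 (n + s) u) (fcomp f 1 (n + s) v)"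
proof -
  obtain p q where "p \<in> G" "q \<in> G" and pq: "c \<le> dist ((g ^^ s) p) ((g ^^ s) q)"
    using \<open>spreads g c G s\<close> unfolding spreads_def by blast
  moreover obtain u v where "u \<in> V" "v \<in> V" "fcomp f 1 n u = p" "fcomp f 1 n v = q"
    using assms(3) \<open>p \<in> G\<close> \<open>q \<in> G\<close> by (metis imageE subsetD)
  moreover have "fcomp f 1 (n + s) = fcomp f (1 + n) s \<circ> fcomp f 1 n"
    by (rule fcomp_add)
  ultimately have "dist ((g ^^ s) p) (fcomp f 1 (n + s) u) < e"
    "dist (fcomp f 1 (n + s) v) ((g ^^ s) q) < e"
    using shadow \<open>G \<subseteq> I01\<close> by (auto simp: dist_commute)
  moreover have "dist ((g ^^ s) p) ((g ^^ s) q)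
      \<le> dist ((g ^^ s) p) (fcomp f 1 (n + s) u) + dist (fcomp f 1 (n + s) u) (fcomp f 1 (n + s) v)
        + dist (fcomp f 1 (n + s) v) ((g ^^ s) q)"
    using dist_triangle[of "(g ^^ s) p" "(g ^^ s) q" "fcomp f 1 (n + s) u"]
      dist_triangle[of "fcomp f 1 (n + s) u" "(g ^^ s) q" "fcomp f 1 (n + s) v"]
    by linarith
  ultimately have "c - 2 * e < dist (fcomp f 1 (n + s) u) (fcomp f 1 (n + s) v)"
    using pq by linarith
  then show ?thesis
    using \<open>u \<in> V\<close> \<open>v \<in> V\<close> by blast
qed

definition cofinitely_sensitive :: "(nat \<Rightarrow> real \<Rightarrow> real) \<Rightarrow> bool" where
  "cofinitely_sensitive f \<longleftrightarrow>
     (\<exists>\<delta>>0. \<forall>V. nonempty_open V \<longrightarrow> eventually (\<lambda>n. n \<in> Nset f V \<delta>) sequentially)"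

locale shadowed_sensitive_system =
  fixes f :: "nat \<Rightarrow> real \<Rightarrow> real" and g :: "real \<Rightarrow> real" and \<delta> :: real and N :: nat
  assumes f_cont: "\<And>n. n \<ge> 1 \<Longrightarrow> continuous_on I01 (f n)"
    and f_maps: "\<And>n. n \<ge> 1 \<Longrightarrow> f n ` I01 \<subseteq> I01"
    and g_cont: "continuous_on I01 g"
    and g_maps: "g ` I01 \<subseteq> I01"
    and coll: "collectively_converges f g"
    and \<delta>_pos: "\<delta> > 0"
    and sens: "\<And>V. nonempty_open V \<Longrightarrow> Nset f V \<delta> \<noteq> {}"
    and shadow: "\<And>n k x. n \<ge> N \<Longrightarrow> x \<in> I01 \<Longrightarrow> dist (fcomp f n k x) ((g ^^ k) x) < \<delta> / 8"
begin

lemma continuous_on_fcomp1: "continuous_on I01 (fcomp f 1 n)"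
  using continuous_on_fcomp[OF f_cont f_maps] by simp

lemma fcomp1_maps: "x \<in> I01 \<Longrightarrow> fcomp f 1 n x \<in> I01"
  using fcomp_maps[where f = f, OF f_maps] by simp

definition cell :: "nat \<Rightarrow> real set" where
  "cell j = {real j * (\<delta> / 4) .. real j * (\<delta> / 4) + \<delta> / 4}"

definition relevant :: "nat \<Rightarrow> bool" where
  "relevant j \<longleftrightarrow> cell j \<subseteq> I01 \<and> (\<exists>a\<ge>N. \<exists>V. nonempty_open V \<and> fcomp f 1 a ` V \<subseteq> cell j)"

definition covers :: "nat \<Rightarrow> nat \<Rightarrow> bool" where
  "covers i j \<longleftrightarrow> (\<exists>t\<ge>1. cell j \<subseteq> (g ^^ t) ` cell i)"

lemma finite_relevant: "finite {j. relevant j}"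
proof (rule finite_subset)
  show "{j. relevant j} \<subseteq> {..nat \<lceil>4 / \<delta>\<rceil>}"
  proof
    fix j assume "j \<in> {j. relevant j}"
    then have "real j * (\<delta> / 4) \<le> 1"
      using \<delta>_pos by (force simp: relevant_def cell_def I01_def)
    then have "real j \<le> 4 / \<delta>"
      using \<delta>_pos by (simp add: field_simps)
    then show "j \<in> {..nat \<lceil>4 / \<delta>\<rceil>}"
      by (simp add: le_nat_iff) linarith
  qed
qed simp

lemma covers_trans: "covers a b \<Longrightarrow> covers b c \<Longrightarrow> covers a c"
proof -
  assume "covers a b" "covers b c"
  then obtain t u where "t \<ge> 1" "cell b \<subseteq> (g ^^ t) ` cell a" "u \<ge> 1" "cell c \<subseteq> (g ^^ u) ` cell b"
    unfolding covers_def by blast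
  then have "cell c \<subseteq> (g ^^ u) ` (g ^^ t) ` cell a"
    by (meson image_mono order_trans)
  then have "cell c \<subseteq> (g ^^ (u + t)) ` cell a"
    by (simp only: funpow_add image_comp)
  then show "covers a c"
    using \<open>t \<ge> 1\<close> unfolding covers_def by (intro exI[of _ "u + t"]) simp
qed

lemma late_expansion:
  assumes "nonempty_open V"
  shows "\<exists>V' n u v. nonempty_open V' \<and> connected V' \<and> V' \<subseteq> V \<and> a < n \<and> u \<in> V' \<and> v \<in> V'
           \<and> \<delta> < dist (fcomp f 1 n u) (fcomp f 1 n v)"
proof -
  obtain x where "x \<in> V" and V_open: "openin (top_of_set I01) V"
    using assms unfolding nonempty_open_def by blast
  then have "x \<in> I01"
    using openin_subset by fastforce
  obtain e where "e > 0" and e: "\<forall>y\<in>I01. dist y x < e \<longrightarrow> y \<in> V"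
    using V_open \<open>x \<in> V\<close> unfolding openin_euclidean_subtopology_iff by blast
  have "\<exists>d>0. \<forall>m\<in>{..a}. \<forall>y\<in>I01. dist y x < d \<longrightarrow> dist (fcomp f 1 m y) (fcomp f 1 m x) < \<delta> / 2"
  proof (rule ex_pos_bound_finite)
    fix m
    show "\<exists>d>0. \<forall>y\<in>I01. dist y x < d \<longrightarrow> dist (fcomp f 1 m y) (fcomp f 1 m x) < \<delta> / 2"
      using continuous_on_fcomp1[of m] \<open>x \<in> I01\<close> \<delta>_pos unfolding continuous_on_iff
      by (meson half_gt_zero)
  qed auto
  then obtain d where "d > 0"
    and d: "\<forall>m\<in>{..a}. \<forall>y\<in>I01. dist y x < d \<longrightarrow> dist (fcomp f 1 m y) (fcomp f 1 m x) < \<delta> / 2"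
    by blast
  define V' where "V' = I01 \<inter> ball x (min e d)"
  have "nonempty_open V'"
    unfolding nonempty_open_def V'_def using \<open>x \<in> I01\<close> \<open>e > 0\<close> \<open>d > 0\<close>
    by (auto intro: openin_open_Int)
  moreover have "connected V'"
    unfolding V'_def I01_def by (intro convex_connected convex_Int) auto
  moreover have "V' \<subseteq> V"
    unfolding V'_def using e by (auto simp: dist_commute)
  moreover obtain n u v where "u \<in> V'" "v \<in> V'" and uv: "\<delta> < dist (fcomp f 1 n u) (fcomp f 1 n v)"
    using sens[OF \<open>nonempty_open V'\<close>] unfolding Nset_def by blast
  moreover have "a < n"
  proof (rule ccontr)
    assume "\<not> a < n"
    then have "dist (fcomp f 1 n u) (fcomp f 1 n x) < \<delta> / 2" "dist (fcomp f 1 n v) (fcomp f 1 n x) < \<delta> / 2"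
      using d \<open>u \<in> V'\<close> \<open>v \<in> V'\<close> by (auto simp: V'_def dist_commute)
    then show False
      using uv dist_triangle_half_l by fastforce
  qed
  ultimately show ?thesis
    by blast
qed

lemma cell_between:
  assumes "A \<in> I01" and "B \<in> I01" and "\<delta> < dist A B"
  shows "\<exists>j. cell j \<subseteq> I01 \<and> cell j \<subseteq> {min A B + \<delta> / 8 .. max A B - \<delta> / 8}"
proof -
  define lo where "lo = min A B + \<delta> / 8"
  define j where "j = nat \<lceil>lo / (\<delta> / 4)\<rceil>"
  have "lo \<ge> 0"
    using assms(1,2) \<delta>_pos by (auto simp: lo_def I01_def)
  then have "real j = of_int \<lceil>lo / (\<delta> / 4)\<rceil>"
    using \<delta>_pos by (simp add: j_def)
  then have "lo / (\<delta> / 4) \<le> real j" "real j < lo / (\<delta> / 4) + 1"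
    by linarith+
  then have "lo \<le> real j * (\<delta> / 4)" "real j * (\<delta> / 4) < lo + \<delta> / 4"
    using \<delta>_pos by (simp_all add: field_simps)
  moreover have "lo + \<delta> / 2 \<le> max A B - \<delta> / 8" "max A B \<le> 1"
    using assms by (auto simp: lo_def dist_real_def I01_def)
  ultimately show ?thesis
    using \<open>lo \<ge> 0\<close> \<delta>_pos by (intro exI[of _ j]) (auto simp: cell_def I01_def lo_def)
qed

lemma covered_cell_relevant:
  assumes "openin (top_of_set I01) V" and "cell j \<subseteq> I01" and "cell j \<subseteq> fcomp f 1 n ` V"
    and "N \<le> n"
  shows "relevant j"
proof -
  define y where "y = real j * (\<delta> / 4) + \<delta> / 8"
  have "y \<in> fcomp f 1 n ` V"
    using assms(3) \<delta>_pos by (auto simp: y_def cell_def)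
  moreover have "\<delta> / 8 > 0"
    using \<delta>_pos by simp
  ultimately obtain V' where "nonempty_open V'" "fcomp f 1 n ` V' \<subseteq> ball y (\<delta> / 8)"
    using nonempty_open_preimage_ball[OF continuous_on_fcomp1 assms(1)] by blast
  moreover have "ball y (\<delta> / 8) \<subseteq> cell j"
  proof
    fix x assume "x \<in> ball y (\<delta> / 8)"
    then have "\<bar>y - x\<bar> < \<delta> / 8"
      unfolding mem_ball dist_real_def .
    then show "x \<in> cell j"
      unfolding cell_def y_def abs_less_iff atLeastAtMost_iff by linarith
  qed
  ultimately show ?thesis
    using assms(2,4) unfolding relevant_def by blast
qed

lemma late_expansion_covers_relevant_cell:
  assumes "nonempty_open V" and "N \<le> a"
  shows "\<exists>V' n u v j. openin (top_of_set I01) V' \<and> V' \<subseteq> V \<and> a < n \<and> u \<in> V' \<and> v \<in> V'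
           \<and> relevant j \<and> cell j \<subseteq> fcomp f 1 n ` V'
           \<and> cell j \<subseteq> {min (fcomp f 1 n u) (fcomp f 1 n v) + \<delta> / 8 ..
                       max (fcomp f 1 n u) (fcomp f 1 n v) - \<delta> / 8}"
proof -
  obtain V' n u v where V': "nonempty_open V'" "connected V'" "V' \<subseteq> V"
    and "a < n" "u \<in> V'" "v \<in> V'" and uv: "\<delta> < dist (fcomp f 1 n u) (fcomp f 1 n v)"
    using late_expansion[OF assms(1)] by blast
  have V'_open: "openin (top_of_set I01) V'" and "V' \<subseteq> I01"
    using V'(1) openin_imp_subset unfolding nonempty_open_def by auto
  obtain j where "cell j \<subseteq> I01"
    and j: "cell j \<subseteq> {min (fcomp f 1 n u) (fcomp f 1 n v) + \<delta> / 8 ..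
                        max (fcomp f 1 n u) (fcomp f 1 n v) - \<delta> / 8}"
    using cell_between[OF fcomp1_maps fcomp1_maps uv] \<open>u \<in> V'\<close> \<open>v \<in> V'\<close> \<open>V' \<subseteq> I01\<close> by blast
  have "connected (fcomp f 1 n ` V')"
    using continuous_on_subset[OF continuous_on_fcomp1 \<open>V' \<subseteq> I01\<close>] V'(2)
    by (rule connected_continuous_image)
  then have "{min (fcomp f 1 n u) (fcomp f 1 n v) .. max (fcomp f 1 n u) (fcomp f 1 n v)}
      \<subseteq> fcomp f 1 n ` V'"
    using \<open>u \<in> V'\<close> \<open>v \<in> V'\<close> by (rule Icc_subset_connected_image)
  moreover have "{min (fcomp f 1 n u) (fcomp f 1 n v) + \<delta> / 8 .. max (fcomp f 1 n u) (fcomp f 1 n v) - \<delta> / 8}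
      \<subseteq> {min (fcomp f 1 n u) (fcomp f 1 n v) .. max (fcomp f 1 n u) (fcomp f 1 n v)}"
    using \<delta>_pos by auto
  ultimately have "cell j \<subseteq> fcomp f 1 n ` V'"
    using j by blast
  moreover have "relevant j"
    using covered_cell_relevant[OF V'_open \<open>cell j \<subseteq> I01\<close> calculation] \<open>a < n\<close> assms(2) by simp
  ultimately show ?thesis
    using V'_open V'(3) \<open>a < n\<close> \<open>u \<in> V'\<close> \<open>v \<in> V'\<close> j by blast
qed

lemma relevant_successor:
  assumes "relevant i"
  shows "\<exists>j. relevant j \<and> covers i j"
proof -
  obtain a V where "N \<le> a" "nonempty_open V" and into_i: "fcomp f 1 a ` V \<subseteq> cell i"
    and "cell i \<subseteq> I01"
    using assms unfolding relevant_def by blast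
  then obtain V' n u v j where "V' \<subseteq> V" "a < n" "u \<in> V'" "v \<in> V'" "relevant j"
    and j: "cell j \<subseteq> {min (fcomp f 1 n u) (fcomp f 1 n v) + \<delta> / 8 ..
                        max (fcomp f 1 n u) (fcomp f 1 n v) - \<delta> / 8}"
    using late_expansion_covers_relevant_cell[OF \<open>nonempty_open V\<close> \<open>N \<le> a\<close>] by blast
  define s where "s = n - a"
  define p where "p = fcomp f 1 a u"
  define q where "q = fcomp f 1 a v"
  have "p \<in> cell i" "q \<in> cell i"
    using into_i \<open>V' \<subseteq> V\<close> \<open>u \<in> V'\<close> \<open>v \<in> V'\<close> by (auto simp: p_def q_def)
  have "fcomp f 1 n = fcomp f (1 + a) s \<circ> fcomp f 1 a"
    using fcomp_add[of f 1 a s] \<open>a < n\<close> by (simp add: s_def)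
  then have "fcomp f 1 n u = fcomp f (1 + a) s p" "fcomp f 1 n v = fcomp f (1 + a) s q"
    by (simp_all add: p_def q_def)
  moreover have "dist (fcomp f (1 + a) s p) ((g ^^ s) p) < \<delta> / 8"
    "dist (fcomp f (1 + a) s q) ((g ^^ s) q) < \<delta> / 8"
    using \<open>N \<le> a\<close> \<open>p \<in> cell i\<close> \<open>q \<in> cell i\<close> \<open>cell i \<subseteq> I01\<close> by (intro shadow; force)+
  ultimately have "\<bar>fcomp f 1 n u - (g ^^ s) p\<bar> < \<delta> / 8" "\<bar>fcomp f 1 n v - (g ^^ s) q\<bar> < \<delta> / 8"
    by (simp_all only: dist_real_def)
  then have "cell j \<subseteq> {min ((g ^^ s) p) ((g ^^ s) q) .. max ((g ^^ s) p) ((g ^^ s) q)}"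
    using j Icc_min_max_shrink_subset by blast
  also have "\<dots> \<subseteq> (g ^^ s) ` cell i"
  proof (rule Icc_subset_connected_image)
    show "connected ((g ^^ s) ` cell i)"
      using continuous_on_subset[OF continuous_on_funpow[OF g_maps g_cont] \<open>cell i \<subseteq> I01\<close>]
      by (rule connected_continuous_image) (simp add: cell_def)
  qed fact+
  finally have "covers i j"
    using \<open>a < n\<close> unfolding covers_def s_def by (intro exI[of _ "n - a"]) simp
  then show ?thesis
    using \<open>relevant j\<close> by blast
qed

lemma relevant_eventually_spreads:
  assumes "relevant i"
  shows "\<exists>c>0. eventually (spreads g c (cell i)) sequentially"
proof -
  obtain j where "covers i j" "covers j j"
    using finite_trans_reaches_loop[OF finite_relevant, of covers i] covers_trans relevant_successor
      assms by blast
  then obtain t K where t: "cell j \<subseteq> (g ^^ t) ` cell i" and "K \<ge> 1"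
    and K: "cell j \<subseteq> (g ^^ K) ` cell j"
    unfolding covers_def by blast
  have "real j * (\<delta> / 4) \<in> cell j" "real j * (\<delta> / 4) + \<delta> / 4 \<in> cell j"
    "real j * (\<delta> / 4) \<noteq> real j * (\<delta> / 4) + \<delta> / 4"
    using \<delta>_pos by (auto simp: cell_def)
  then obtain c where "c > 0" and c: "\<And>s. spreads g c (cell j) s"
    using periodic_set_spreads[OF K \<open>K \<ge> 1\<close>] by blast
  have "spreads g c (cell i) s" if "s \<ge> t" for s
    using spreads_covered[OF t c, of "s - t"] that by simp
  then show ?thesis
    using \<open>c > 0\<close> by (auto simp: eventually_sequentially)
qed

lemma relevant_eventually_spreads_uniformly:
  "\<exists>c>0. \<forall>i. relevant i \<longrightarrow> eventually (spreads g c (cell i)) sequentially"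
proof -
  have "\<exists>c>0. \<forall>i\<in>{j. relevant j}. eventually (spreads g c (cell i)) sequentially"
  proof (rule ex_pos_bound_finite[OF finite_relevant])
    fix i c c'
    assume "eventually (spreads g c (cell i)) sequentially" "c' \<le> c"
    then show "eventually (spreads g c' (cell i)) sequentially"
      by (auto elim: eventually_mono intro: spreads_mono)
  qed (use relevant_eventually_spreads in auto)
  then show ?thesis
    by auto
qed

lemma cofinitely_sensitive: "cofinitely_sensitive f"
proof -
  obtain c where "c > 0"
    and spread: "\<And>i. relevant i \<Longrightarrow> eventually (spreads g c (cell i)) sequentially"
    using relevant_eventually_spreads_uniformly by blast
  obtain N' where N': "\<forall>n\<ge>N'. \<forall>k. \<forall>x\<in>I01. dist (fcomp f n k x) ((g ^^ k) x) < c / 4"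
    using collectively_converges_dist[OF f_maps g_maps coll, of "c / 4"] \<open>c > 0\<close> by auto
  have "eventually (\<lambda>m. m \<in> Nset f V (c / 2)) sequentially" if V: "nonempty_open V" for V
  proof -
    obtain V' n j where "V' \<subseteq> V" "max N N' < n" "relevant j"
      and covered: "cell j \<subseteq> fcomp f 1 n ` V'"
      using late_expansion_covers_relevant_cell[OF V, of "max N N'"] by auto
    obtain t where t: "\<And>s. s \<ge> t \<Longrightarrow> spreads g c (cell j) s"
      using spread[OF \<open>relevant j\<close>] unfolding eventually_sequentially by blast
    have late: "n + s \<in> Nset f V (c / 2)" if "s \<ge> t" for s
    proof -
      have "cell j \<subseteq> I01"
        using \<open>relevant j\<close> unfolding relevant_def by blast
      moreover have "\<forall>x\<in>I01. dist (fcomp f (1 + n) s x) ((g ^^ s) x) < c / 4"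
        using N' \<open>max N N' < n\<close> by simp
      ultimately have "\<exists>u\<in>V'. \<exists>v\<in>V'. c - 2 * (c / 4) < dist (fcomp f 1 (n + s) u) (fcomp f 1 (n + s) v)"
        using covered t[OF that] by (intro spreads_transfer_to_fcomp)
      then show ?thesis
        unfolding Nset_def using \<open>V' \<subseteq> V\<close> \<open>max N N' < n\<close> by auto
    qed
    have "m \<in> Nset f V (c / 2)" if "m \<ge> n + t" for m
      using late[of "m - n"] that by simp
    then show ?thesis
      unfolding eventually_sequentially by blast
  qed
  then show ?thesis
    unfolding cofinitely_sensitive_def using \<open>c > 0\<close> by (intro exI[of _ "c / 2"]) auto
qed

end

lemma sensitive_imp_cofinitely_sensitive:
  assumes cont: "\<And>n. n \<ge> 1 \<Longrightarrow> continuous_on I01 (f n)"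
    and maps: "\<And>n. n \<ge> 1 \<Longrightarrow> f n ` I01 \<subseteq> I01"
    and unif: "uniform_limit I01 f g sequentially"
    and coll: "collectively_converges f g"
    and "sensitive f"
  shows "cofinitely_sensitive f"
proof -
  have g_maps: "g ` I01 \<subseteq> I01"
    using uniform_limit_maps_I01[OF maps unif] .
  obtain \<delta> where "\<delta> > 0" "\<And>V. nonempty_open V \<Longrightarrow> Nset f V \<delta> \<noteq> {}"
    using \<open>sensitive f\<close> unfolding sensitive_def by blast
  moreover obtain N where "\<forall>n\<ge>N. \<forall>k. \<forall>x\<in>I01. dist (fcomp f n k x) ((g ^^ k) x) < \<delta> / 8"
    using collectively_converges_dist[OF maps g_maps coll, of "\<delta> / 8"] \<open>\<delta> > 0\<close> by auto
  ultimately interpret shadowed_sensitive_system f g \<delta> N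
    using cont maps uniform_limit_continuous_on_I01[OF cont unif] g_maps coll
    by unfold_locales auto
  show ?thesis
    by (rule cofinitely_sensitive)
qed

lemma cofinitely_sensitive_eventually_all:
  assumes "cofinitely_sensitive f"
  obtains \<delta> where "\<delta> > 0"
    and "\<And>Us. \<forall>U\<in>set Us. nonempty_open U \<Longrightarrow>
           eventually (\<lambda>n. \<forall>i<length Us. n \<in> Nset f (Us ! i) \<delta>) sequentially"
proof -
  obtain \<delta> where "\<delta> > 0" and \<delta>: "\<And>V. nonempty_open V \<Longrightarrow> eventually (\<lambda>n. n \<in> Nset f V \<delta>) sequentially"
    using assms unfolding cofinitely_sensitive_def by blast
  have "eventually (\<lambda>n. \<forall>i<length Us. n \<in> Nset f (Us ! i) \<delta>) sequentially"
    if "\<forall>U\<in>set Us. nonempty_open U" for Us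
  proof -
    have "eventually (\<lambda>n. \<forall>i\<in>{..<length Us}. n \<in> Nset f (Us ! i) \<delta>) sequentially"
      using that by (intro eventually_ball_finite) (auto intro: \<delta>)
    then show ?thesis
      by (auto elim: eventually_mono)
  qed
  then show ?thesis
    by (rule that[OF \<open>\<delta> > 0\<close>])
qed

lemma cofinitely_sensitive_imp_multi_sensitive:
  assumes "cofinitely_sensitive f"
  shows "multi_sensitive f"
proof -
  obtain \<delta> where "\<delta> > 0" and \<delta>: "\<And>Vs. \<forall>V\<in>set Vs. nonempty_open V \<Longrightarrow>
      eventually (\<lambda>n. \<forall>i<length Vs. n \<in> Nset f (Vs ! i) \<delta>) sequentially"
    using cofinitely_sensitive_eventually_all[OF assms] by blast
  have "(\<Inter>i<length Vs. Nset f (Vs ! i) \<delta>) \<noteq> {}" if Vs: "\<forall>V\<in>set Vs. nonempty_open V" for Vs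
  proof -
    obtain M where "\<forall>m\<ge>M. \<forall>i<length Vs. m \<in> Nset f (Vs ! i) \<delta>"
      using \<delta>[OF Vs] unfolding eventually_sequentially by blast
    then have "M \<in> (\<Inter>i<length Vs. Nset f (Vs ! i) \<delta>)"
      by blast
    then show ?thesis
      by auto
  qed
  then show ?thesis
    unfolding multi_sensitive_def using \<open>\<delta> > 0\<close> by blast
qed

lemma cofinitely_sensitive_imp_strongly_multi_sensitive:
  assumes "cofinitely_sensitive f"
  shows "strongly_multi_sensitive f"
  unfolding strongly_multi_sensitive_def
proof (intro allI impI)
  fix vs :: "nat list"
  assume vs: "vs \<noteq> [] \<and> (\<forall>v\<in>set vs. v \<ge> 1)"
  obtain \<delta> where "\<delta> > 0" and \<delta>: "\<And>Us. \<forall>U\<in>set Us. nonempty_open U \<Longrightarrow>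
      eventually (\<lambda>n. \<forall>i<length Us. n \<in> Nset f (Us ! i) \<delta>) sequentially"
    using cofinitely_sensitive_eventually_all[OF assms] by blast
  show "multi_sensitive_wrt f vs"
    unfolding multi_sensitive_wrt_def
  proof (intro exI[of _ \<delta>] conjI allI impI)
    fix Us :: "real set list"
    assume Us: "length Us = length vs \<and> (\<forall>U\<in>set Us. nonempty_open U)"
    then obtain M where M: "\<And>m i. m \<ge> M \<Longrightarrow> i < length Us \<Longrightarrow> m \<in> Nset f (Us ! i) \<delta>"
      using \<delta> unfolding eventually_sequentially by blast
    have "max M 1 \<in> Nset (fpow_seq f (vs ! i)) (Us ! i) \<delta>" if "i < length vs" for i
    proof -
      have "vs ! i \<ge> 1"
        using vs nth_mem[OF that] by blast
      then have "M \<le> vs ! i * max M 1"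
        by (metis max.cobounded1 mult_le_mono1 mult_1 order_trans)
      then have "vs ! i * max M 1 \<in> Nset f (Us ! i) \<delta>"
        using M Us that by simp
      then show ?thesis
        using \<open>vs ! i \<ge> 1\<close> by (simp add: Nset_fpow_seq)
    qed
    then show "(\<Inter>i<length vs. Nset (fpow_seq f (vs ! i)) (Us ! i) \<delta>) \<noteq> {}"
      by blast
  qed (rule \<open>\<delta> > 0\<close>)
qed

lemma strongly_multi_sensitive_imp_N_sensitive:
  "strongly_multi_sensitive f \<Longrightarrow> N_sensitive f"
  unfolding strongly_multi_sensitive_def N_sensitive_def by simp

lemma N_sensitive_imp_sensitive:
  assumes "N_sensitive f"
  shows "sensitive f"
proof -
  have "multi_sensitive_wrt f [1..<1 + 1]"
    using assms unfolding N_sensitive_def by blast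
  then obtain \<delta> where "\<delta> > 0" and \<delta>: "\<And>Us. length Us = 1 \<and> (\<forall>U\<in>set Us. nonempty_open U) \<Longrightarrow>
      (\<Inter>i<1. Nset (fpow_seq f ([1] ! i)) (Us ! i) \<delta>) \<noteq> {}"
    unfolding multi_sensitive_wrt_def by auto
  have "Nset f V \<delta> \<noteq> {}" if "nonempty_open V" for V
    using \<delta>[of "[V]"] that by (auto simp: lessThan_Suc Nset_fpow_seq)
  then show ?thesis
    unfolding sensitive_def using \<open>\<delta> > 0\<close> by blast
qed

lemma multi_sensitive_imp_sensitive:
  assumes "multi_sensitive f"
  shows "sensitive f"
proof -
  obtain \<delta> where "\<delta> > 0" and \<delta>: "\<And>Vs. Vs \<noteq> [] \<and> (\<forall>V\<in>set Vs. nonempty_open V) \<Longrightarrow>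
      (\<Inter>i<length Vs. Nset f (Vs ! i) \<delta>) \<noteq> {}"
    using assms unfolding multi_sensitive_def by blast
  have "Nset f V \<delta> \<noteq> {}" if "nonempty_open V" for V
    using \<delta>[of "[V]"] that by (simp add: lessThan_Suc)
  then show ?thesis
    unfolding sensitive_def using \<open>\<delta> > 0\<close> by blast
qed

theorem mainTheorem8:
  fixes f :: "nat \<Rightarrow> real \<Rightarrow> real" and g :: "real \<Rightarrow> real"
  assumes cont: "\<And>n. n \<ge> 1 \<Longrightarrow> continuous_on I01 (f n)"
    and maps: "\<And>n. n \<ge> 1 \<Longrightarrow> f n ` I01 \<subseteq> I01"
    and unif: "uniform_limit I01 f g sequentially"
    and coll: "collectively_converges f g"
    and feeb: "feebly_open f"
  shows "(strongly_multi_sensitive f \<longleftrightarrow> N_sensitive f)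
       \<and> (N_sensitive f \<longleftrightarrow> multi_sensitive f)
       \<and> (multi_sensitive f \<longleftrightarrow> sensitive f)"
proof -
  have "sensitive f \<Longrightarrow> cofinitely_sensitive f"
    using sensitive_imp_cofinitely_sensitive[OF cont maps unif coll] .
  then show ?thesis
    using cofinitely_sensitive_imp_strongly_multi_sensitive cofinitely_sensitive_imp_multi_sensitive
      strongly_multi_sensitive_imp_N_sensitive N_sensitive_imp_sensitive multi_sensitive_imp_sensitive
    by blast
qed

end
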